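(* Let $n\ge 2$ and let $A\in\mathrm{GL}(n,2)$ be arbitrary, with columns $\mathbf{a}_1,\dots,\mathbf{a}_n\in\mathbb{F}_2^n$. Then there exist two probability distributions $p,q\in\Delta(\mathbb{F}_2^n)$ such that $\widehat p(\mathbf{a}_i)=\widehat q(\mathbf{a}_i)$ for all $i\in\{1,\dots,n\}$, but $p(\mathbf{0})\neq q(\mathbf{0})$.
   Context: $\mathbb{F}_2$ is the field with two elements; $\mathrm{GL}(n,2)$ is the group of invertible $n\times n$ matrices over $\mathbb{F}_2$. $\Delta(\mathbb{F}_2^n)$ denotes the set of probability distributions on $\mathbb{F}_2^n$. For $\mathbf{u},\mathbf{s}\in\mathbb{F}_2^n$, $\mathbf{u}\cdot\mathbf{s}=\sum_j u_js_j \pmod 2$. For $p\in\Delta(\mathbb{F}_2^n)$ the Walsh transform is $\widehat p(\mathbf{u})=\sum_{\mathbf{s}\in\mathbb{F}_2^n}(-1)^{\mathbf{u}\cdot\mathbf{s}}p(\mathbf{s})$. (Physical interpretation: $p$ is the syndrome distribution of a state relative to an $n$-qubit stabilizer state, $p(\mathbf{0})$ is the fidelity, and $\widehat p(\mathbf{a}_i)$ are the expectations of the generators in the gauge $A$.) *)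

theory Defs
  imports "HOL-Analysis.Analysis" "HOL-Library.Z2"
begin

instance bit :: finite
proof
  have "(UNIV :: bit set) = {0, 1}"
    by (auto simp: bit_not_zero_iff)
  then show "finite (UNIV :: bit set)" by (metis finite.emptyI finite_insert)
qed

text \<open>Vectors in F_2^n are elements of bit^'n, with the finite index type 'n of
  cardinality n; n x n matrices over F_2 are elements of bit^'n^'n.\<close>

definition dot2 :: "bit ^ 'n \<Rightarrow> bit ^ 'n \<Rightarrow> bit" where
  "dot2 u s = (\<Sum>j\<in>UNIV. u $ j * s $ j)"

definition is_distribution :: "(bit ^ 'n \<Rightarrow> real) \<Rightarrow> bool" where
  "is_distribution p \<longleftrightarrow> (\<forall>s. 0 \<le> p s) \<and> (\<Sum>s\<in>UNIV. p s) = 1"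

definition walsh :: "(bit ^ 'n \<Rightarrow> real) \<Rightarrow> bit ^ 'n \<Rightarrow> real" where
  "walsh p u = (\<Sum>s\<in>UNIV. (if dot2 u s = 0 then 1 else -1) * p s)"

definition col2 :: "bit ^ 'n ^ 'n \<Rightarrow> 'n \<Rightarrow> bit ^ 'n" where
  "col2 A i = (\<chi> j. A $ j $ i)"

end

theory Submission
  imports Defs
begin

text \<open>Let s_1, ..., s_n be the basis dual to the columns of A, i.e. a_i . s_k = delta_ik, and
  write chi_u(s) = (-1)^(u . s). For the uniform distributions p on {0, s_1 + s_2} and q on
  {s_1, s_2}, multiplicativity of chi_u gives 2 (hat p(u) - hat q(u)) = (1 - chi_u(s_1)) (1 - chi_u(s_2)),
  which vanishes whenever u is orthogonal to s_1 or to s_2, as every column a_i is.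
  Yet p(0) = 1/2 while q(0) = 0.\<close>

definition character :: "bit ^ 'n \<Rightarrow> bit ^ 'n \<Rightarrow> real" where
  "character u s = (if dot2 u s = 0 then 1 else -1)"

definition uniform_pair :: "bit ^ 'n \<Rightarrow> bit ^ 'n \<Rightarrow> bit ^ 'n \<Rightarrow> real" where
  "uniform_pair a b s = (if s = a then 1/2 else 0) + (if s = b then 1/2 else 0)"

lemma dot2_add_right: "dot2 u (s + t) = dot2 u s + dot2 u t"
  unfolding dot2_def by (simp only: vector_add_component distrib_left sum.distrib)

lemma dot2_zero_right [simp]: "dot2 u 0 = 0"
  unfolding dot2_def by simp

lemma dot2_col2: "dot2 (col2 A i) s = (transpose A *v s) $ i"
  unfolding dot2_def col2_def transpose_def matrix_vector_mult_def by simp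

lemma character_zero_right [simp]: "character u 0 = 1"
  by (simp add: character_def)

lemma character_add_right: "character u (s + t) = character u s * character u t"
proof -
  have "\<And>x y :: bit. x + y = 0 \<longleftrightarrow> x = y"
    by (cases "x = 0"; cases "y = 0") (auto simp: one_add_one)
  then show ?thesis
    by (cases "dot2 u s"; cases "dot2 u t") (auto simp: character_def dot2_add_right)
qed

lemma is_distribution_uniform_pair: "a \<noteq> b \<Longrightarrow> is_distribution (uniform_pair a b)"
  unfolding is_distribution_def uniform_pair_def by (simp add: sum.distrib)

lemma walsh_uniform_pair: "walsh (uniform_pair a b) u = (character u a + character u b) / 2"
proof -
  have "(if dot2 u s = 0 then 1 else -1) * uniform_pair a b s =
      (if s = a then character u a / 2 else 0) + (if s = b then character u b / 2 else 0)" for s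
    by (simp add: uniform_pair_def character_def)
  then show ?thesis
    unfolding walsh_def by (simp add: sum.distrib add_divide_distrib)
qed

lemma walsh_uniform_pair_eq:
  assumes "dot2 u s = 0 \<or> dot2 u t = 0"
  shows "walsh (uniform_pair 0 (s + t)) u = walsh (uniform_pair s t) u"
proof -
  have "(1 + character u s * character u t) - (character u s + character u t) =
      (1 - character u s) * (1 - character u t)"
    by (simp add: algebra_simps)
  also have "\<dots> = 0"
    using assms by (auto simp: character_def)
  finally show ?thesis
    by (simp add: walsh_uniform_pair character_add_right)
qed

lemma invertible_dual_basis:
  fixes A :: "bit ^ 'n ^ 'n"
  assumes "invertible A"
  obtains s where "\<And>i k. dot2 (col2 A i) (s k) = (if i = k then 1 else 0)"
proof -
  obtain B where "B ** A = mat 1"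
    using assms unfolding invertible_def by blast
  then have "transpose A ** transpose B = mat 1"
    by (metis matrix_transpose_mul transpose_mat)
  then have "transpose A *v (transpose B *v axis k 1) = axis k 1" for k
    by (metis matrix_vector_mul_assoc matrix_vector_mul_lid)
  then have "dot2 (col2 A i) (transpose B *v axis k 1) = (if i = k then 1 else 0)" for i k
    by (simp add: dot2_col2 axis_def)
  then show thesis
    by (rule that)
qed

theorem proposition1:
  fixes A :: "bit ^ 'n ^ 'n"
  assumes "CARD('n) \<ge> 2"
    and "invertible A"
  shows "\<exists>p q :: bit ^ 'n \<Rightarrow> real.
           is_distribution p \<and> is_distribution q \<and>
           (\<forall>i. walsh p (col2 A i) = walsh q (col2 A i)) \<and>
           p 0 \<noteq> q 0"
proof -
  obtain s where dual: "\<And>i k. dot2 (col2 A i) (s k) = (if i = k then 1 else 0)"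
    using invertible_dual_basis[OF assms(2)] by blast
  obtain k1 k2 :: 'n where "k1 \<noteq> k2"
    using assms(1) card_le_Suc0_iff_eq[of "UNIV :: 'n set"] by auto
  then have "dot2 (col2 A k1) (s k1) = 1" "dot2 (col2 A k1) (s k2) = 0"
      "dot2 (col2 A k2) (s k2) = 1" "dot2 (col2 A k1) (s k1 + s k2) = 1"
    by (simp_all add: dual dot2_add_right)
  then have nonzero: "s k1 \<noteq> 0" "s k2 \<noteq> 0" "s k1 + s k2 \<noteq> 0" and distinct: "s k1 \<noteq> s k2"
    by (metis dot2_zero_right zero_neq_one)+
  show ?thesis
  proof (intro exI conjI allI)
    show "is_distribution (uniform_pair 0 (s k1 + s k2))"
      using nonzero(3) by (intro is_distribution_uniform_pair) simp
    show "is_distribution (uniform_pair (s k1) (s k2))"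
      using distinct by (rule is_distribution_uniform_pair)
    show "walsh (uniform_pair 0 (s k1 + s k2)) (col2 A i) =
        walsh (uniform_pair (s k1) (s k2)) (col2 A i)" for i
      using \<open>k1 \<noteq> k2\<close> by (intro walsh_uniform_pair_eq) (simp add: dual)
    show "uniform_pair 0 (s k1 + s k2) 0 \<noteq> uniform_pair (s k1) (s k2) 0"
      using nonzero by (simp add: uniform_pair_def)
  qed
qed

end
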